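(* Let $R$ be a commutative Noetherian ring, $M$ a faithful primeful $R$-module having at least one prime submodule, $X=\mathrm{Spec}(M)$, $N$ an $R$-module, $K\le M$, $U=X\setminus V(K)$, and $W$ an open subset of $X$ with $U\subseteq W$. Let $\rho_{WU}:\mathcal{A}(N,M)(W)\to\mathcal{A}(N,M)(U)$ be the restriction map. Then $\ker(\rho_{WU})=\Gamma_{(K:M)}(\mathcal{A}(N,M)(W))$.
   Context: For a submodule $L$ of an $R$-module $M$, $(L:M)=\{r\in R\mid rM\subseteq L\}$. A submodule $P$ of $M$ is prime if $P\neq M$ and whenever $rm\in P$ ($r\in R$, $m\in M$) then $r\in (P:M)$ or $m\in P$. $\mathrm{Spec}(M)$ is the set of prime submodules. $M$ is faithful if $\mathrm{Ann}_R(M)=0$; primeful if $M=0$ or $\mathrm{Spec}(M)\to\mathrm{Spec}(R/\mathrm{Ann}(M))$, $P\mapsto(P:M)/\mathrm{Ann}(M)$, is surjective. For $L\le M$, $V(L)=\{P\in X\mid (P:M)\supseteq (L:M)\}$; these are the closed sets of the Zariski topology. For open $U\subseteq X$, $\mathrm{Supp}(U)=\{(P:M)\mid P\in U\}$. $\mathcal{A}(N,M)(U)$ is the $R$-module of families $(\gamma_{\mathfrak p})_{\mathfrak p\in\mathrm{Supp}(U)}\in\prod_{\mathfrak p\in\mathrm{Supp}(U)}N_{\mathfrak p}$ such that for each $Q\in U$ there exist an open neighbourhood $W'\subseteq U$ of $Q$ and $s\in R$, $m\in N$ with $s\notin(P:M)$ and $\gamma_{(P:M)}=m/s$ for every $P\in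 W'$. For $V\subseteq U$ open, $\rho_{UV}$ sends $(\gamma_{\mathfrak p})_{\mathfrak p\in\mathrm{Supp}(U)}$ to $(\gamma_{\mathfrak p})_{\mathfrak p\in\mathrm{Supp}(V)}$ (zero map if $V=\emptyset$). $\Gamma_I(H)=\bigcup_{n\ge1}(0:_H I^n)$. *)

theory Defs
  imports Main "HOL.Modules"
begin

definition is_ideal :: "'r::comm_ring_1 set \<Rightarrow> bool" where
  "is_ideal I \<longleftrightarrow> 0 \<in> I \<and> (\<forall>a\<in>I. \<forall>b\<in>I. a + b \<in> I) \<and> (\<forall>r. \<forall>a\<in>I. r * a \<in> I)"

definition prime_ideal :: "'r::comm_ring_1 set \<Rightarrow> bool" where
  "prime_ideal p \<longleftrightarrow> is_ideal p \<and> p \<noteq> UNIV \<and> (\<forall>a b. a * b \<in> p \<longrightarrow> a \<in> p \<or> b \<in> p)"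

definition ideal_gen :: "'r::comm_ring_1 set \<Rightarrow> 'r set" where
  "ideal_gen S = \<Inter>{I. is_ideal I \<and> S \<subseteq> I}"

definition noetherian_ring :: "'r::comm_ring_1 itself \<Rightarrow> bool" where
  "noetherian_ring _ \<longleftrightarrow> (\<forall>I::'r set. is_ideal I \<longrightarrow> (\<exists>F. finite F \<and> I = ideal_gen F))"

fun ideal_pow :: "'r::comm_ring_1 set \<Rightarrow> nat \<Rightarrow> 'r set" where
  "ideal_pow I 0 = UNIV"
| "ideal_pow I (Suc n) = ideal_gen {a * b | a b. a \<in> I \<and> b \<in> ideal_pow I n}"

definition colon :: "('r::comm_ring_1 \<Rightarrow> 'm::ab_group_add \<Rightarrow> 'm) \<Rightarrow> 'm set \<Rightarrow> 'r set" where
  "colon sm L = {r. \<forall>m. sm r m \<in> L}"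

definition ann :: "('r::comm_ring_1 \<Rightarrow> 'm::ab_group_add \<Rightarrow> 'm) \<Rightarrow> 'r set" where
  "ann sm = {r. \<forall>m. sm r m = 0}"

definition faithful :: "('r::comm_ring_1 \<Rightarrow> 'm::ab_group_add \<Rightarrow> 'm) \<Rightarrow> bool" where
  "faithful sm \<longleftrightarrow> ann sm = {0}"

definition prime_submodule :: "('r::comm_ring_1 \<Rightarrow> 'm::ab_group_add \<Rightarrow> 'm) \<Rightarrow> 'm set \<Rightarrow> bool" where
  "prime_submodule sm P \<longleftrightarrow> module.subspace sm P \<and> P \<noteq> UNIV \<and>
     (\<forall>r m. sm r m \<in> P \<longrightarrow> r \<in> colon sm P \<or> m \<in> P)"

definition Spec_mod :: "('r::comm_ring_1 \<Rightarrow> 'm::ab_group_add \<Rightarrow> 'm) \<Rightarrow> 'm set set" where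
  "Spec_mod sm = {P. prime_submodule sm P}"

text \<open>Primeful: M = 0 or the natural map Spec(M) \<rightarrow> Spec(R/Ann M), P \<mapsto> (P:M)/Ann M,
  is surjective. Prime ideals of R/Ann(M) are identified with the prime ideals of R
  containing Ann(M) (correspondence theorem).\<close>

definition primeful :: "('r::comm_ring_1 \<Rightarrow> 'm::ab_group_add \<Rightarrow> 'm) \<Rightarrow> bool" where
  "primeful sm \<longleftrightarrow> (UNIV :: 'm set) = {0} \<or>
     (\<forall>p. prime_ideal p \<and> ann sm \<subseteq> p \<longrightarrow> (\<exists>P\<in>Spec_mod sm. colon sm P = p))"

definition Vset :: "('r::comm_ring_1 \<Rightarrow> 'm::ab_group_add \<Rightarrow> 'm) \<Rightarrow> 'm set \<Rightarrow> 'm set set" where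
  "Vset sm L = {P \<in> Spec_mod sm. colon sm L \<subseteq> colon sm P}"

definition zopen :: "('r::comm_ring_1 \<Rightarrow> 'm::ab_group_add \<Rightarrow> 'm) \<Rightarrow> 'm set set \<Rightarrow> bool" where
  "zopen sm U \<longleftrightarrow> (\<exists>L. module.subspace sm L \<and> U = Spec_mod sm - Vset sm L)"

definition Supp :: "('r::comm_ring_1 \<Rightarrow> 'm::ab_group_add \<Rightarrow> 'm) \<Rightarrow> 'm set set \<Rightarrow> 'r set set" where
  "Supp sm U = (\<lambda>P. colon sm P) ` U"

section \<open>Localization N_p: elements are equivalence classes of pairs (n, s), s \<notin> p\<close>

definition frac :: "('r::comm_ring_1 \<Rightarrow> 'n::ab_group_add \<Rightarrow> 'n) \<Rightarrow> 'r set \<Rightarrow> 'n \<Rightarrow> 'r \<Rightarrow> ('n \<times> 'r) set" where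
  "frac smN p n s = {(n', s'). s' \<notin> p \<and> (\<exists>u. u \<notin> p \<and> smN u (smN s' n - smN s n') = 0)}"

definition loc_smult :: "('r::comm_ring_1 \<Rightarrow> 'n::ab_group_add \<Rightarrow> 'n) \<Rightarrow> 'r set \<Rightarrow> 'r \<Rightarrow> ('n \<times> 'r) set \<Rightarrow> ('n \<times> 'r) set" where
  "loc_smult smN p r c = (let (n, s) = (SOME x. x \<in> c) in frac smN p (smN r n) s)"

text \<open>A section over U is a family indexed by Supp(U), represented as a function
  'r set \<Rightarrow> ('n \<times> 'r) set which is {} outside Supp(U).\<close>

definition A_sec :: "('r::comm_ring_1 \<Rightarrow> 'm::ab_group_add \<Rightarrow> 'm) \<Rightarrow> ('r \<Rightarrow> 'n::ab_group_add \<Rightarrow> 'n)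
    \<Rightarrow> 'm set set \<Rightarrow> ('r set \<Rightarrow> ('n \<times> 'r) set) set" where
  "A_sec smM smN U = {\<gamma>. (\<forall>p. p \<notin> Supp smM U \<longrightarrow> \<gamma> p = {}) \<and>
     (\<forall>Q\<in>U. \<exists>W'. zopen smM W' \<and> Q \<in> W' \<and> W' \<subseteq> U \<and>
        (\<exists>s n. \<forall>P\<in>W'. s \<notin> colon smM P \<and> \<gamma> (colon smM P) = frac smN (colon smM P) n s))}"

definition sec_zero :: "('r::comm_ring_1 \<Rightarrow> 'm::ab_group_add \<Rightarrow> 'm) \<Rightarrow> ('r \<Rightarrow> 'n::ab_group_add \<Rightarrow> 'n)
    \<Rightarrow> 'm set set \<Rightarrow> 'r set \<Rightarrow> ('n \<times> 'r) set" where
  "sec_zero smM smN U = (\<lambda>p. if p \<in> Supp smM U then frac smN p 0 1 else {})"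

definition sec_smult :: "('r::comm_ring_1 \<Rightarrow> 'n::ab_group_add \<Rightarrow> 'n) \<Rightarrow> 'r
    \<Rightarrow> ('r set \<Rightarrow> ('n \<times> 'r) set) \<Rightarrow> 'r set \<Rightarrow> ('n \<times> 'r) set" where
  "sec_smult smN r \<gamma> = (\<lambda>p. if \<gamma> p = {} then {} else loc_smult smN p r (\<gamma> p))"

text \<open>Restriction \<rho>_{UV}; for V = {} this yields the (unique) zero section.\<close>

definition restr :: "('r::comm_ring_1 \<Rightarrow> 'm::ab_group_add \<Rightarrow> 'm) \<Rightarrow> 'm set set
    \<Rightarrow> ('r set \<Rightarrow> ('n \<times> 'r) set) \<Rightarrow> 'r set \<Rightarrow> ('n \<times> 'r) set" where
  "restr smM V \<gamma> = (\<lambda>p. if p \<in> Supp smM V then \<gamma> p else {})"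

definition ker_restr :: "('r::comm_ring_1 \<Rightarrow> 'm::ab_group_add \<Rightarrow> 'm) \<Rightarrow> ('r \<Rightarrow> 'n::ab_group_add \<Rightarrow> 'n)
    \<Rightarrow> 'm set set \<Rightarrow> 'm set set \<Rightarrow> ('r set \<Rightarrow> ('n \<times> 'r) set) set" where
  "ker_restr smM smN W U = {\<gamma> \<in> A_sec smM smN W. restr smM U \<gamma> = sec_zero smM smN U}"

definition Gamma_tors :: "('r::comm_ring_1 \<Rightarrow> 'm::ab_group_add \<Rightarrow> 'm) \<Rightarrow> ('r \<Rightarrow> 'n::ab_group_add \<Rightarrow> 'n)
    \<Rightarrow> 'r set \<Rightarrow> 'm set set \<Rightarrow> ('r set \<Rightarrow> ('n \<times> 'r) set) set" where
  "Gamma_tors smM smN I W = {\<gamma> \<in> A_sec smM smN W. \<exists>n\<ge>1.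
      \<forall>r\<in>ideal_pow I n. sec_smult smN r \<gamma> = sec_zero smM smN W}"

end

theory Submission
  imports Defs "HOL-Library.Multiset"
begin

text \<open>Since M is faithful and primeful, every prime ideal of R is some (P:M), so the supports
  of W and U are the sets of primes not containing (L:M) resp. I = (K:M). A section killed by a
  power of I vanishes at every prime not containing I. Conversely, a section vanishing there is,
  near each point of W, a fraction n/s on the primes avoiding some f; then n vanishes locally
  wherever f and I are both invertible, so f^K I^N kills n. The f admitting such a bound form an
  ideal, and since it is finitely generated, finitely many bounds suffice on all of W.\<close>

lemma ideal_zero: "is_ideal I \<Longrightarrow> 0 \<in> I"
  by (simp add: is_ideal_def)

lemma ideal_add: "is_ideal I \<Longrightarrow> a \<in> I \<Longrightarrow> b \<in> I \<Longrightarrow> a + b \<in> I"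
  by (simp add: is_ideal_def)

lemma ideal_mult_left: "is_ideal I \<Longrightarrow> a \<in> I \<Longrightarrow> r * a \<in> I"
  by (simp add: is_ideal_def)

lemma ideal_mult_right: "is_ideal I \<Longrightarrow> a \<in> I \<Longrightarrow> a * r \<in> I"
  by (metis ideal_mult_left mult.commute)

lemma is_ideal_UNIV: "is_ideal UNIV"
  by (simp add: is_ideal_def)

lemma is_ideal_ideal_gen: "is_ideal (ideal_gen S)"
  unfolding ideal_gen_def is_ideal_def by auto

lemma ideal_gen_subset: "S \<subseteq> ideal_gen S"
  unfolding ideal_gen_def by auto

lemma ideal_gen_least: "is_ideal I \<Longrightarrow> S \<subseteq> I \<Longrightarrow> ideal_gen S \<subseteq> I"
  unfolding ideal_gen_def by auto

lemma ideal_gen_mono: "S \<subseteq> T \<Longrightarrow> ideal_gen S \<subseteq> ideal_gen T"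
  by (meson is_ideal_ideal_gen ideal_gen_least ideal_gen_subset order_trans)

lemma is_ideal_ideal_pow: "is_ideal (ideal_pow I n)"
  by (cases n) (auto simp: is_ideal_UNIV is_ideal_ideal_gen)

lemma ideal_pow_antimono:
  assumes "m \<le> n"
  shows "ideal_pow I n \<subseteq> ideal_pow I m"
  using assms
proof (induction n)
  case (Suc n)
  have "ideal_pow I (Suc n) \<subseteq> ideal_pow I n"
    using ideal_gen_least[OF is_ideal_ideal_pow, of "{a * b |a b. a \<in> I \<and> b \<in> ideal_pow I n}" I n]
    by (auto intro: ideal_mult_left is_ideal_ideal_pow)
  with Suc show ?case
    by (cases "m = Suc n") auto
qed simp

lemma power_in_ideal_pow: "a \<in> I \<Longrightarrow> a ^ n \<in> ideal_pow I n"
  by (induction n) (auto intro!: ideal_gen_subset[THEN subsetD])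

lemma prime_ideal_is_ideal: "prime_ideal p \<Longrightarrow> is_ideal p"
  by (simp add: prime_ideal_def)

lemma prime_ideal_one: "prime_ideal p \<Longrightarrow> 1 \<notin> p"
  unfolding prime_ideal_def using ideal_mult_left[of p 1] by auto

lemma prime_ideal_mult: "prime_ideal p \<Longrightarrow> a \<notin> p \<Longrightarrow> b \<notin> p \<Longrightarrow> a * b \<notin> p"
  unfolding prime_ideal_def by blast

lemma prime_ideal_mult_iff: "prime_ideal p \<Longrightarrow> a * b \<notin> p \<longleftrightarrow> a \<notin> p \<and> b \<notin> p"
  unfolding prime_ideal_def using ideal_mult_left ideal_mult_right by blast

lemma prime_ideal_power: "prime_ideal p \<Longrightarrow> a \<notin> p \<Longrightarrow> a ^ n \<notin> p"
  by (induction n) (auto simp: prime_ideal_one prime_ideal_mult)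

lemma prime_ideal_add: "prime_ideal p \<Longrightarrow> a + b \<notin> p \<Longrightarrow> a \<notin> p \<or> b \<notin> p"
  using ideal_add prime_ideal_def by blast

lemma ideal_gen_mult:
  assumes a: "a \<in> ideal_gen X" and b: "b \<in> ideal_gen Y"
  shows "a * b \<in> ideal_gen {x * y | x y. x \<in> X \<and> y \<in> Y}"
proof -
  let ?T = "ideal_gen {x * y | x y. x \<in> X \<and> y \<in> Y}"
  have T: "is_ideal ?T" by (rule is_ideal_ideal_gen)
  have quotient_ideal: "is_ideal {c. c * d \<in> ?T}" for d
    unfolding is_ideal_def using ideal_zero[OF T] ideal_add[OF T] ideal_mult_left[OF T]
    by (auto simp: distrib_right mult.assoc)
  have "x * b \<in> ?T" if "x \<in> X" for x
  proof -
    have "Y \<subseteq> {c. c * x \<in> ?T}"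
      using that ideal_gen_subset by (fastforce simp: mult.commute)
    then have "ideal_gen Y \<subseteq> {c. c * x \<in> ?T}"
      by (rule ideal_gen_least[OF quotient_ideal])
    then show ?thesis using b by (auto simp: mult.commute)
  qed
  then have "ideal_gen X \<subseteq> {c. c * b \<in> ?T}"
    by (intro ideal_gen_least[OF quotient_ideal]) auto
  then show ?thesis using a by blast
qed

definition monomials :: "'r::comm_ring_1 set \<Rightarrow> nat \<Rightarrow> 'r set" where
  "monomials G n = {prod_mset M | M. set_mset M \<subseteq> G \<and> size M = n}"

lemma ideal_pow_ideal_gen_subset_monomials: "ideal_pow (ideal_gen G) n \<subseteq> ideal_gen (monomials G n)"
proof (induction n)
  case 0
  have "monomials G 0 = {1}" unfolding monomials_def by auto
  then show ?case
    using ideal_gen_subset[of "{1}"] ideal_mult_right[OF is_ideal_ideal_gen, of 1 "{1}"] by auto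
next
  case (Suc n)
  have "{x * y | x y. x \<in> G \<and> y \<in> monomials G n} \<subseteq> monomials G (Suc n)"
    unfolding monomials_def by clarify (metis prod_mset.add_mset set_mset_add_mset_insert
      insert_subset size_add_mset)
  then have "ideal_gen {x * y | x y. x \<in> G \<and> y \<in> monomials G n} \<subseteq> ideal_gen (monomials G (Suc n))"
    by (rule ideal_gen_mono)
  with Suc show ?case
    unfolding ideal_pow.simps
    by (intro ideal_gen_least[OF is_ideal_ideal_gen]) (blast dest: ideal_gen_mult)
qed

text \<open>A monomial of degree |G| K + 1 in the generators repeats some generator K times.\<close>

lemma ideal_pow_subset_of_generator_powers:
  assumes A: "is_ideal A" and G: "finite G" and powers: "\<And>g. g \<in> G \<Longrightarrow> g ^ K \<in> A"
  shows "ideal_pow (ideal_gen G) (card G * K + 1) \<subseteq> A"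
proof -
  have "monomials G (card G * K + 1) \<subseteq> A"
  proof (clarsimp simp: monomials_def)
    fix M :: "'a multiset"
    assume MG: "set_mset M \<subseteq> G" and size: "size M = Suc (card G * K)"
    have "\<exists>g\<in>#M. K \<le> count M g"
    proof (rule ccontr)
      assume "\<not> ?thesis"
      then have "size M \<le> card (set_mset M) * K"
        using sum_mono[of "set_mset M" "count M" "\<lambda>_. K"]
        by (force simp: size_multiset_overloaded_eq)
      also have "\<dots> \<le> card G * K"
        using MG G by (simp add: card_mono)
      finally show False using size by simp
    qed
    then obtain g where g: "g \<in># M" "K \<le> count M g" by blast
    then have "M = replicate_mset K g + (M - replicate_mset K g)"
      by (simp add: subseteq_mset_def count_replicate_mset subset_mset.add_diff_inverse)
    then have "prod_mset M = g ^ K * prod_mset (M - replicate_mset K g)"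
      by (metis prod_mset.union prod_mset_replicate_mset)
    then show "prod_mset M \<in> A"
      using powers g(1) MG ideal_mult_right[OF A] by auto
  qed
  then show ?thesis
    using ideal_pow_ideal_gen_subset_monomials[of G] ideal_gen_least[OF A] by blast
qed

lemma is_ideal_add_multiples:
  assumes I: "is_ideal I"
  shows "is_ideal {x + r * a | x r. x \<in> I}"
  unfolding is_ideal_def
proof (intro conjI ballI allI)
  show "0 \<in> {x + r * a | x r. x \<in> I}"
    using ideal_zero[OF I] by (intro CollectI exI[of _ 0]) auto
  fix u v assume "u \<in> {x + r * a | x r. x \<in> I}"
  then obtain x r where u: "u = x + r * a" "x \<in> I" by blast
  show "t * u \<in> {x + r * a | x r. x \<in> I}" for t
    using u ideal_mult_left[OF I, of x t]
    by (intro CollectI exI[of _ "t * x"] exI[of _ "t * r"]) (auto simp: algebra_simps)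
  assume "v \<in> {x + r * a | x r. x \<in> I}"
  then obtain y t where v: "v = y + t * a" "y \<in> I" by blast
  show "u + v \<in> {x + r * a | x r. x \<in> I}"
    using u v ideal_add[OF I, of x y]
    by (intro CollectI exI[of _ "x + y"] exI[of _ "r + t"]) (auto simp: algebra_simps)
qed

lemma prime_ideal_avoiding_powers:
  assumes A: "is_ideal A" and h: "\<And>m. h ^ m \<notin> A"
  shows "\<exists>p. prime_ideal p \<and> A \<subseteq> p \<and> h \<notin> p"
proof -
  define S where "S = {I. is_ideal I \<and> A \<subseteq> I \<and> (\<forall>m. h ^ m \<notin> I)}"
  have "S \<noteq> {}" using A h unfolding S_def by blast
  moreover have "\<Union>C \<in> S" if Cne: "C \<noteq> {}" and "subset.chain S C" for C
  proof -
    have CS: "C \<subseteq> S" and chain: "\<forall>x\<in>C. \<forall>y\<in>C. x \<subseteq> y \<or> y \<subseteq> x"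
      using that(2) unfolding subset.chain_def by auto
    have Ci: "\<And>I. I \<in> C \<Longrightarrow> is_ideal I \<and> A \<subseteq> I \<and> (\<forall>m. h ^ m \<notin> I)"
      using CS S_def by blast
    obtain I0 where I0: "I0 \<in> C" using Cne by blast
    have "is_ideal (\<Union>C)"
      unfolding is_ideal_def
    proof (intro conjI ballI allI)
      show "0 \<in> \<Union>C" using I0 Ci ideal_zero by blast
      show "a + b \<in> \<Union>C" if "a \<in> \<Union>C" "b \<in> \<Union>C" for a b
      proof -
        from that obtain I1 I2 where "a \<in> I1" "b \<in> I2" "I1 \<in> C" "I2 \<in> C" by blast
        then show ?thesis using chain Ci ideal_add by (metis UnionI subsetD)
      qed
      show "r * a \<in> \<Union>C" if "a \<in> \<Union>C" for r a
        using that Ci ideal_mult_left by blast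
    qed
    moreover have "A \<subseteq> \<Union>C" using I0 Ci by blast
    moreover have "\<forall>m. h ^ m \<notin> \<Union>C" using Ci by blast
    ultimately show ?thesis unfolding S_def by blast
  qed
  ultimately obtain p where pS: "p \<in> S" and maximal: "\<forall>X\<in>S. p \<subseteq> X \<longrightarrow> X = p"
    using subset_Zorn_nonempty[of S] by blast
  have p: "is_ideal p" "A \<subseteq> p" "\<forall>m. h ^ m \<notin> p" using pS S_def by auto
  have power_in_extension: "\<exists>m. h ^ m \<in> {x + r * a | x r. x \<in> p}" if "a \<notin> p" for a
  proof (rule ccontr)
    let ?X = "{x + r * a | x r. x \<in> p}"
    assume "\<not> ?thesis"
    moreover have "p \<subseteq> ?X"
    proof
      fix x assume "x \<in> p"
      then show "x \<in> ?X" by (intro CollectI exI[of _ x] exI[of _ 0]) simp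
    qed
    ultimately have "?X \<in> S" "p \<subseteq> ?X"
      using is_ideal_add_multiples[OF p(1), of a] p(2) unfolding S_def by blast+
    moreover have "a \<in> ?X"
      using ideal_zero[OF p(1)] by (intro CollectI exI[of _ 0] exI[of _ 1]) simp
    ultimately show False using maximal that by blast
  qed
  have "a \<in> p \<or> b \<in> p" if ab: "a * b \<in> p" for a b
  proof (rule ccontr)
    assume "\<not> (a \<in> p \<or> b \<in> p)"
    then obtain m k x r y t where "h ^ m = x + r * a" "h ^ k = y + t * b" "x \<in> p" "y \<in> p"
      using power_in_extension by blast
    then have "h ^ (m + k) = x * (y + t * b) + (r * a) * y + (r * t) * (a * b)"
      by (simp add: power_add algebra_simps)
    also have "\<dots> \<in> p"
      using ideal_mult_right[OF p(1) \<open>x \<in> p\<close>] ideal_mult_left[OF p(1) \<open>y \<in> p\<close>]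
        ideal_mult_left[OF p(1) ab] ideal_add[OF p(1)] by blast
    finally show False using p(3) by blast
  qed
  moreover have "p \<noteq> UNIV" using p(3) by (metis UNIV_I power_0)
  ultimately have "prime_ideal p" using p(1) unfolding prime_ideal_def by blast
  then show ?thesis using p(2) p(3) by (metis power_one_right)
qed

text \<open>Local bounds on the sets D(f) of primes avoiding f patch to a global one: the f admitting
  a bound form an ideal, which is finitely generated (quasi-compactness of Spec R).\<close>

lemma is_ideal_uniform_on_basic_opens:
  fixes \<Phi> :: "nat \<Rightarrow> 'r::comm_ring_1 set \<Rightarrow> bool"
  assumes mono: "\<And>N N' q. \<Phi> N q \<Longrightarrow> N \<le> N' \<Longrightarrow> \<Phi> N' q"
  shows "is_ideal {f. \<exists>N. \<forall>q. prime_ideal q \<and> f \<notin> q \<longrightarrow> \<Phi> N q}"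
    (is "is_ideal ?Good")
  unfolding is_ideal_def
proof (intro conjI ballI allI)
  show "0 \<in> ?Good"
    using ideal_zero prime_ideal_is_ideal by blast
  show "a + b \<in> ?Good" if ab: "a \<in> ?Good" "b \<in> ?Good" for a b
  proof -
    obtain Na Nb where
      Na: "\<And>q. prime_ideal q \<Longrightarrow> a \<notin> q \<Longrightarrow> \<Phi> Na q" and
      Nb: "\<And>q. prime_ideal q \<Longrightarrow> b \<notin> q \<Longrightarrow> \<Phi> Nb q"
      using ab by blast
    have "\<Phi> (max Na Nb) q" if "prime_ideal q" "a + b \<notin> q" for q
      using prime_ideal_add[OF that] mono[OF Na[OF that(1)]] mono[OF Nb[OF that(1)]] by auto
    then show ?thesis by blast
  qed
  show "r * a \<in> ?Good" if "a \<in> ?Good" for r a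
    using that prime_ideal_mult_iff by blast
qed

lemma noetherian_uniform_bound:
  fixes \<Phi> :: "nat \<Rightarrow> 'r::comm_ring_1 set \<Rightarrow> bool"
  assumes noetherian: "noetherian_ring TYPE('r)"
    and mono: "\<And>N N' q. \<Phi> N q \<Longrightarrow> N \<le> N' \<Longrightarrow> \<Phi> N' q"
    and local_bound: "\<And>q. q \<in> S \<Longrightarrow>
      prime_ideal q \<and> (\<exists>f N. f \<notin> q \<and> (\<forall>q'. prime_ideal q' \<and> f \<notin> q' \<longrightarrow> \<Phi> N q'))"
  shows "\<exists>N. \<forall>q\<in>S. \<Phi> N q"
proof -
  define Good where "Good = {f. \<exists>N. \<forall>q. prime_ideal q \<and> f \<notin> q \<longrightarrow> \<Phi> N q}"
  have "is_ideal Good"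
    unfolding Good_def using mono by (rule is_ideal_uniform_on_basic_opens)
  then obtain F where F: "finite F" "Good = ideal_gen F"
    using noetherian unfolding noetherian_ring_def by blast
  have "\<exists>N. \<forall>q. prime_ideal q \<and> h \<notin> q \<longrightarrow> \<Phi> N q" if "h \<in> F" for h
    using that ideal_gen_subset[of F] unfolding F(2)[symmetric] Good_def by blast
  then obtain bound where bound: "\<And>h q. h \<in> F \<Longrightarrow> prime_ideal q \<Longrightarrow> h \<notin> q \<Longrightarrow> \<Phi> (bound h) q"
    by metis
  have "\<Phi> (sum bound F) q" if qS: "q \<in> S" for q
  proof -
    obtain f N where q: "prime_ideal q" and f: "f \<notin> q"
      and "\<forall>q'. prime_ideal q' \<and> f \<notin> q' \<longrightarrow> \<Phi> N q'"
      using local_bound[OF qS] by blast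
    then have "f \<in> ideal_gen F" unfolding F(2)[symmetric] Good_def by blast
    then obtain h where h: "h \<in> F" "h \<notin> q"
      using ideal_gen_least[OF prime_ideal_is_ideal[OF q], of F] f by blast
    show ?thesis
      using mono[OF bound[OF h(1) q h(2)]] member_le_sum[OF h(1) _ F(1), of bound] by simp
  qed
  then show ?thesis by blast
qed

context module
begin

lemma frac_mem:
  "(x, y) \<in> frac scale q n s \<longleftrightarrow> y \<notin> q \<and> (\<exists>u. u \<notin> q \<and> (u * y) *s n = (u * s) *s x)"
  unfolding frac_def by (simp add: scale_right_diff_distrib)

lemma frac_self: "prime_ideal q \<Longrightarrow> s \<notin> q \<Longrightarrow> (n, s) \<in> frac scale q n s"
  unfolding frac_mem using prime_ideal_one by (auto intro!: exI[of _ 1])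

lemma frac_nonempty: "prime_ideal q \<Longrightarrow> s \<notin> q \<Longrightarrow> frac scale q n s \<noteq> {}"
  using frac_self by blast

lemma frac_eq_if_mem:
  assumes q: "prime_ideal q" and s: "s \<notin> q" and ab: "(a, b) \<in> frac scale q n s"
  shows "frac scale q a b = frac scale q n s"
proof -
  from ab obtain u where b: "b \<notin> q" and u: "u \<notin> q" and e1: "(u * b) *s n = (u * s) *s a"
    unfolding frac_mem by blast
  show ?thesis
  proof (rule set_eqI, clarify)
    fix x y
    show "(x, y) \<in> frac scale q a b \<longleftrightarrow> (x, y) \<in> frac scale q n s"
    proof
      assume "(x, y) \<in> frac scale q a b"
      then obtain v where y: "y \<notin> q" and v: "v \<notin> q" and e2: "(v * y) *s a = (v * b) *s x"
        unfolding frac_mem by blast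
      have "((u * v * b) * y) *s n = (v * y) *s ((u * b) *s n)" by (simp add: ac_simps)
      also have "\<dots> = (u * s) *s ((v * y) *s a)" using e1 by (simp add: ac_simps)
      also have "\<dots> = ((u * v * b) * s) *s x" using e2 by (simp add: ac_simps)
      finally show "(x, y) \<in> frac scale q n s"
        unfolding frac_mem using y u v b prime_ideal_mult[OF q] by (metis mult.assoc)
    next
      assume "(x, y) \<in> frac scale q n s"
      then obtain v where y: "y \<notin> q" and v: "v \<notin> q" and e2: "(v * y) *s n = (v * s) *s x"
        unfolding frac_mem by blast
      have "((u * v * s) * y) *s a = (v * y) *s ((u * s) *s a)" by (simp add: ac_simps)
      also have "\<dots> = (v * y) *s ((u * b) *s n)" using e1 by simp
      also have "\<dots> = (u * b) *s ((v * y) *s n)" by (simp add: ac_simps)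
      also have "\<dots> = (u * b) *s ((v * s) *s x)" using e2 by simp
      also have "\<dots> = ((u * v * s) * b) *s x" by (simp add: ac_simps)
      finally show "(x, y) \<in> frac scale q a b"
        unfolding frac_mem using y u v s prime_ideal_mult[OF q] by (metis mult.assoc)
    qed
  qed
qed

lemma loc_smult_frac:
  assumes q: "prime_ideal q" and s: "s \<notin> q"
  shows "loc_smult scale q r (frac scale q n s) = frac scale q (r *s n) s"
proof -
  obtain n' s' where chosen: "(SOME x. x \<in> frac scale q n s) = (n', s')" by fastforce
  have "(n', s') \<in> frac scale q n s"
    unfolding chosen[symmetric] using frac_self[OF q s] by (rule someI)
  then obtain u where s': "s' \<notin> q" and u: "u \<notin> q" and e: "(u * s') *s n = (u * s) *s n'"
    unfolding frac_mem by blast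
  have "(u * s') *s (r *s n) = (u * s) *s (r *s n')"
    using arg_cong[OF e, of "scale r"] by (simp add: ac_simps)
  then have "(r *s n', s') \<in> frac scale q (r *s n) s"
    unfolding frac_mem using s' u by auto
  then show ?thesis
    unfolding loc_smult_def chosen by (simp add: frac_eq_if_mem[OF q s])
qed

lemma frac_eq_zero_iff:
  assumes q: "prime_ideal q" and s: "s \<notin> q"
  shows "frac scale q n s = frac scale q 0 1 \<longleftrightarrow> (\<exists>u. u \<notin> q \<and> u *s n = 0)"
proof
  assume "frac scale q n s = frac scale q 0 1"
  then have "(n, s) \<in> frac scale q 0 1" using frac_self[OF q s, of n] by simp
  then show "\<exists>u. u \<notin> q \<and> u *s n = 0"
    unfolding frac_mem by (metis mult_1_right scale_zero_right)
next
  assume "\<exists>u. u \<notin> q \<and> u *s n = 0"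
  then have "(0, 1) \<in> frac scale q n s"
    unfolding frac_mem using prime_ideal_one[OF q] by (auto simp flip: scale_scale)
  then show "frac scale q n s = frac scale q 0 1" using frac_eq_if_mem[OF q s] by simp
qed

lemma is_ideal_annihilator: "is_ideal {r. r *s x = 0}"
  unfolding is_ideal_def by (auto simp: scale_left_distrib simp flip: scale_scale)

lemma power_scale_eq_zero_if_locally_zero:
  assumes local_zero: "\<And>q. prime_ideal q \<Longrightarrow> a \<notin> q \<Longrightarrow> \<exists>u. u \<notin> q \<and> u *s x = 0"
  shows "\<exists>k. a ^ k *s x = 0"
proof (rule ccontr)
  assume "\<not> ?thesis"
  then obtain q where q: "prime_ideal q" "{r. r *s x = 0} \<subseteq> q" "a \<notin> q"
    using prime_ideal_avoiding_powers[OF is_ideal_annihilator] by blast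
  then show False using local_zero by blast
qed

lemma ideal_pow_annihilates_if_locally_zero:
  assumes G: "finite G"
    and local_zero: "\<And>q. prime_ideal q \<Longrightarrow> f \<notin> q \<Longrightarrow> \<not> ideal_gen G \<subseteq> q \<Longrightarrow>
      \<exists>u. u \<notin> q \<and> u *s x = 0"
  shows "\<exists>K N. \<forall>r\<in>ideal_pow (ideal_gen G) N. (f ^ K * r) *s x = 0"
proof -
  have "\<exists>k. (f * g) ^ k *s x = 0" if g: "g \<in> G" for g
  proof (rule power_scale_eq_zero_if_locally_zero)
    fix q assume q: "prime_ideal q" "f * g \<notin> q"
    then have "\<not> ideal_gen G \<subseteq> q" using g ideal_gen_subset prime_ideal_mult_iff by blast
    then show "\<exists>u. u \<notin> q \<and> u *s x = 0" using local_zero q prime_ideal_mult_iff by blast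
  qed
  then obtain k where k: "\<And>g. g \<in> G \<Longrightarrow> (f * g) ^ k g *s x = 0" by metis
  define K where "K = sum k G"
  have "g ^ K \<in> {r. r *s (f ^ K *s x) = 0}" if g: "g \<in> G" for g
  proof -
    have "k g \<le> K" unfolding K_def using member_le_sum[OF g, of k, OF _ G] by simp
    then have "(f * g) ^ K *s x = (f * g) ^ (K - k g) *s ((f * g) ^ k g *s x)"
      by (simp flip: power_add)
    then have "(f * g) ^ K *s x = 0" using k[OF g] by simp
    then show ?thesis by (simp add: power_mult_distrib mult.commute)
  qed
  then have "ideal_pow (ideal_gen G) (card G * K + 1) \<subseteq> {r. r *s (f ^ K *s x) = 0}"
    using ideal_pow_subset_of_generator_powers[OF is_ideal_annihilator G] by blast
  then have "\<forall>r\<in>ideal_pow (ideal_gen G) (card G * K + 1). (f ^ K * r) *s x = 0"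
    by (auto simp: mult.commute simp flip: scale_scale)
  then show ?thesis by blast
qed

end

lemma colon_ideal:
  assumes "module smM" "module.subspace smM L"
  shows "is_ideal (colon smM L)"
proof -
  interpret M: module smM by fact
  show ?thesis using assms(2) unfolding is_ideal_def colon_def M.subspace_def
    by (auto simp: M.scale_left_distrib simp flip: M.scale_scale)
qed

lemma colon_prime:
  assumes "module smM" "P \<in> Spec_mod smM"
  shows "prime_ideal (colon smM P)"
proof -
  interpret M: module smM by fact
  have P: "M.subspace P" "P \<noteq> UNIV" "\<And>r m. smM r m \<in> P \<Longrightarrow> r \<in> colon smM P \<or> m \<in> P"
    using assms(2) unfolding Spec_mod_def prime_submodule_def by auto
  have "1 \<notin> colon smM P"
    using P(2) unfolding colon_def by auto
  then have "colon smM P \<noteq> UNIV" by blast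
  moreover have "a \<in> colon smM P \<or> b \<in> colon smM P" if ab: "a * b \<in> colon smM P" for a b
  proof (rule ccontr)
    assume "\<not> ?thesis"
    then obtain m where m: "smM a m \<notin> P" and b: "b \<notin> colon smM P" unfolding colon_def by auto
    have "smM b (smM a m) \<in> P" using ab unfolding colon_def by (simp add: mult.commute)
    then show False using P(3) m b by blast
  qed
  ultimately show ?thesis
    unfolding prime_ideal_def using colon_ideal[OF assms(1) P(1)] by blast
qed

text \<open>Primefulness only covers primes containing Ann(M) = 0; the existence of a prime submodule
  excludes the alternative M = 0.\<close>

lemma colon_Spec_mod_eq_prime_ideals:
  assumes "module smM" "faithful smM" "primeful smM" "Spec_mod smM \<noteq> {}"
  shows "colon smM ` Spec_mod smM = {q. prime_ideal q}"
proof -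
  interpret M: module smM by fact
  have nonzero: "(UNIV :: 'b set) \<noteq> {0}"
  proof
    assume trivial: "(UNIV :: 'b set) = {0}"
    obtain P where "P \<in> Spec_mod smM" using assms(4) by blast
    then have "M.subspace P" "P \<noteq> UNIV" unfolding Spec_mod_def prime_submodule_def by auto
    moreover have "x \<in> P" for x
      using M.subspace_0[OF \<open>M.subspace P\<close>] trivial by (metis UNIV_I singletonD)
    ultimately show False by blast
  qed
  have "q \<in> colon smM ` Spec_mod smM" if q: "prime_ideal q" for q
  proof -
    have "ann smM \<subseteq> q"
      using assms(2) ideal_zero[OF prime_ideal_is_ideal[OF q]] unfolding faithful_def by simp
    moreover have "\<forall>p. prime_ideal p \<and> ann smM \<subseteq> p \<longrightarrow> (\<exists>P\<in>Spec_mod smM. colon smM P = p)"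
      using assms(3) nonzero unfolding primeful_def by argo
    ultimately show ?thesis using q by blast
  qed
  moreover have "colon smM P \<in> {q. prime_ideal q}" if "P \<in> Spec_mod smM" for P
    using colon_prime[OF assms(1) that] by simp
  ultimately show ?thesis by blast
qed

lemma Supp_diff_Vset:
  assumes "colon smM ` Spec_mod smM = {q. prime_ideal q}"
  shows "Supp smM (Spec_mod smM - Vset smM L) = {q. prime_ideal q \<and> \<not> colon smM L \<subseteq> q}"
  using assms unfolding Supp_def Vset_def by blast

lemma A_sec_frac_at:
  assumes "\<gamma> \<in> A_sec smM smN W" "P \<in> W"
  shows "\<exists>n s. s \<notin> colon smM P \<and> \<gamma> (colon smM P) = frac smN (colon smM P) n s"
proof -
  obtain W' s n where "P \<in> W'"
    "\<forall>Q\<in>W'. s \<notin> colon smM Q \<and> \<gamma> (colon smM Q) = frac smN (colon smM Q) n s"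
    using assms unfolding A_sec_def by (auto dest!: bspec[of W _ P])
  then show ?thesis by blast
qed

lemma A_sec_frac_on_basic_open:
  assumes surj: "colon smM ` Spec_mod smM = {q. prime_ideal q}"
    and \<gamma>: "\<gamma> \<in> A_sec smM smN W" and p: "p \<in> Supp smM W"
  obtains f n s where "f \<notin> p"
    and "\<And>q. prime_ideal q \<Longrightarrow> f \<notin> q \<Longrightarrow> s \<notin> q \<and> \<gamma> q = frac smN q n s"
proof -
  obtain P where P: "P \<in> W" "p = colon smM P" using p unfolding Supp_def by blast
  obtain W' s n where "zopen smM W'" "P \<in> W'"
    and frac_on: "\<forall>Q\<in>W'. s \<notin> colon smM Q \<and> \<gamma> (colon smM Q) = frac smN (colon smM Q) n s"
    using \<gamma> P(1) unfolding A_sec_def by (auto dest!: bspec[of W _ P])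
  then obtain L where W': "W' = Spec_mod smM - Vset smM L" unfolding zopen_def by blast
  have Supp_W': "Supp smM W' = {q. prime_ideal q \<and> \<not> colon smM L \<subseteq> q}"
    unfolding W' using surj by (rule Supp_diff_Vset)
  have "p \<in> Supp smM W'" using \<open>P \<in> W'\<close> P(2) unfolding Supp_def by blast
  then obtain f where f: "f \<in> colon smM L" "f \<notin> p" unfolding Supp_W' by blast
  moreover have "s \<notin> q \<and> \<gamma> q = frac smN q n s" if "prime_ideal q" "f \<notin> q" for q
  proof -
    have "q \<in> Supp smM W'" unfolding Supp_W' using that f(1) by blast
    then obtain Q where "Q \<in> W'" "q = colon smM Q" unfolding Supp_def by blast
    then show ?thesis using frac_on by blast
  qed
  ultimately show thesis using that by blast
qed

lemma sec_smult_frac: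
  assumes "module smN" "prime_ideal q" "s \<notin> q" "\<gamma> q = frac smN q n s"
  shows "sec_smult smN r \<gamma> q = frac smN q (smN r n) s"
  using assms module.frac_nonempty[OF assms(1-3)] module.loc_smult_frac[OF assms(1-3)]
  unfolding sec_smult_def by simp

lemma section_torsion_near_point:
  fixes smM :: "'r::comm_ring_1 \<Rightarrow> 'm::ab_group_add \<Rightarrow> 'm"
    and smN :: "'r \<Rightarrow> 'n::ab_group_add \<Rightarrow> 'n"
  assumes "module smN"
    and surj: "colon smM ` Spec_mod smM = {q. prime_ideal q}"
    and G: "finite G"
    and \<gamma>: "\<gamma> \<in> A_sec smM smN W"
    and zero_off_V: "\<And>q. prime_ideal q \<Longrightarrow> \<not> ideal_gen G \<subseteq> q \<Longrightarrow> \<gamma> q = frac smN q 0 1"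
    and p: "p \<in> Supp smM W"
  shows "\<exists>f N. f \<notin> p \<and> (\<forall>q. prime_ideal q \<and> f \<notin> q \<longrightarrow>
           (\<forall>r\<in>ideal_pow (ideal_gen G) N. sec_smult smN r \<gamma> q = frac smN q 0 1))"
proof -
  interpret N: module smN by fact
  obtain f s n where f: "f \<notin> p"
    and frac_near: "\<And>q. prime_ideal q \<Longrightarrow> f \<notin> q \<Longrightarrow> s \<notin> q \<and> \<gamma> q = frac smN q n s"
    using A_sec_frac_on_basic_open[OF surj \<gamma> p] by metis
  have local_zero: "\<exists>u. u \<notin> q \<and> smN u n = 0"
    if q: "prime_ideal q" "f \<notin> q" "\<not> ideal_gen G \<subseteq> q" for q
  proof -
    have s: "s \<notin> q" "\<gamma> q = frac smN q n s" using frac_near[OF q(1,2)] by auto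
    then have "frac smN q n s = frac smN q 0 1" using zero_off_V[OF q(1,3)] by simp
    then show ?thesis using N.frac_eq_zero_iff[OF q(1) s(1)] by blast
  qed
  have "\<exists>K N. \<forall>r\<in>ideal_pow (ideal_gen G) N. smN (f ^ K * r) n = 0"
    using G local_zero by (rule N.ideal_pow_annihilates_if_locally_zero)
  then obtain K N where K: "\<And>r. r \<in> ideal_pow (ideal_gen G) N \<Longrightarrow> smN (f ^ K * r) n = 0"
    by blast
  have "sec_smult smN r \<gamma> q = frac smN q 0 1"
    if q: "prime_ideal q" "f \<notin> q" and r: "r \<in> ideal_pow (ideal_gen G) N" for q r
  proof -
    have s: "s \<notin> q" "\<gamma> q = frac smN q n s" using frac_near[OF q] by auto
    have "f ^ K \<notin> q" using prime_ideal_power[OF q] .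
    moreover have "smN (f ^ K) (smN r n) = 0" using K[OF r] by simp
    ultimately have "frac smN q (smN r n) s = frac smN q 0 1"
      using N.frac_eq_zero_iff[OF q(1) s(1)] by blast
    then show ?thesis using sec_smult_frac[where \<gamma>=\<gamma>, OF assms(1) q(1) s] by simp
  qed
  then show ?thesis using f by (intro exI[of _ f] exI[of _ N]) blast
qed

lemma Gamma_tors_subset_ker_restr:
  assumes "module smM" "module smN"
    and U: "U = Spec_mod smM - Vset smM K" and "U \<subseteq> W"
  shows "Gamma_tors smM smN (colon smM K) W \<subseteq> ker_restr smM smN W U"
proof
  interpret N: module smN by fact
  fix \<gamma> assume "\<gamma> \<in> Gamma_tors smM smN (colon smM K) W"
  then obtain k where \<gamma>: "\<gamma> \<in> A_sec smM smN W"
    and torsion: "\<And>r. r \<in> ideal_pow (colon smM K) k \<Longrightarrow> sec_smult smN r \<gamma> = sec_zero smM smN W"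
    unfolding Gamma_tors_def by blast
  have "\<gamma> p = frac smN p 0 1" if pU: "p \<in> Supp smM U" for p
  proof -
    obtain P where P: "P \<in> U" "p = colon smM P" using pU unfolding Supp_def by blast
    then have p: "prime_ideal p" and "\<not> colon smM K \<subseteq> p"
      using colon_prime[OF assms(1)] unfolding U Vset_def by auto
    then obtain a where a: "a \<in> colon smM K" "a \<notin> p" by blast
    have "P \<in> W" using P(1) \<open>U \<subseteq> W\<close> by blast
    then obtain n s where s: "s \<notin> p" "\<gamma> p = frac smN p n s"
      using A_sec_frac_at[OF \<gamma>] P(2) by blast
    have "p \<in> Supp smM W" using \<open>P \<in> W\<close> P(2) unfolding Supp_def by blast
    then have "frac smN p (smN (a ^ k) n) s = frac smN p 0 1"
      using fun_cong[OF torsion[OF power_in_ideal_pow[OF a(1)]], of p]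
      unfolding sec_smult_frac[where \<gamma>=\<gamma>, OF assms(2) p s] sec_zero_def by simp
    then obtain u where "u \<notin> p" "smN (u * a ^ k) n = 0"
      using N.frac_eq_zero_iff[OF p s(1)] by auto
    moreover have "u * a ^ k \<notin> p"
      using \<open>u \<notin> p\<close> prime_ideal_mult[OF p] prime_ideal_power[OF p a(2)] by blast
    ultimately show ?thesis using s N.frac_eq_zero_iff[OF p s(1)] by auto
  qed
  then have "restr smM U \<gamma> = sec_zero smM smN U"
    unfolding restr_def sec_zero_def by (intro ext) simp
  then show "\<gamma> \<in> ker_restr smM smN W U"
    unfolding ker_restr_def using \<gamma> by blast
qed

lemma ker_restr_subset_Gamma_tors:
  fixes smM :: "'r::comm_ring_1 \<Rightarrow> 'm::ab_group_add \<Rightarrow> 'm"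
    and smN :: "'r \<Rightarrow> 'n::ab_group_add \<Rightarrow> 'n"
  assumes "module smM" "module smN" and noetherian: "noetherian_ring TYPE('r)"
    and surj: "colon smM ` Spec_mod smM = {q. prime_ideal q}"
    and "module.subspace smM K"
    and U: "U = Spec_mod smM - Vset smM K"
    and W: "W = Spec_mod smM - Vset smM L"
  shows "ker_restr smM smN W U \<subseteq> Gamma_tors smM smN (colon smM K) W"
proof
  fix \<gamma> assume "\<gamma> \<in> ker_restr smM smN W U"
  then have \<gamma>: "\<gamma> \<in> A_sec smM smN W" and restr_zero: "restr smM U \<gamma> = sec_zero smM smN U"
    unfolding ker_restr_def by auto
  obtain G where G: "finite G" "colon smM K = ideal_gen G"
    using noetherian colon_ideal[OF assms(1,5)] unfolding noetherian_ring_def by blast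
  have zero_off_V: "\<gamma> q = frac smN q 0 1" if q: "prime_ideal q" "\<not> ideal_gen G \<subseteq> q" for q
  proof -
    have "q \<in> Supp smM U" unfolding U Supp_diff_Vset[OF surj] G(2) using q by blast
    then show ?thesis using fun_cong[OF restr_zero, of q] unfolding restr_def sec_zero_def by simp
  qed
  define \<Phi> where "\<Phi> N q \<longleftrightarrow>
    (\<forall>r\<in>ideal_pow (ideal_gen G) N. sec_smult smN r \<gamma> q = frac smN q 0 1)" for N q
  have \<Phi>_mono: "\<Phi> N' q" if "\<Phi> N q" "N \<le> N'" for N N' q
    using that ideal_pow_antimono unfolding \<Phi>_def by blast
  have "\<exists>N. \<forall>q\<in>Supp smM W. \<Phi> N q"
  proof (rule noetherian_uniform_bound[OF noetherian \<Phi>_mono])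
    fix q assume q: "q \<in> Supp smM W"
    then have "prime_ideal q" unfolding W Supp_diff_Vset[OF surj] by blast
    moreover obtain f N where "f \<notin> q" "\<forall>q'. prime_ideal q' \<and> f \<notin> q' \<longrightarrow> \<Phi> N q'"
      using section_torsion_near_point[OF assms(2) surj G(1) \<gamma> zero_off_V q]
      unfolding \<Phi>_def by blast
    ultimately show "prime_ideal q \<and> (\<exists>f N. f \<notin> q \<and> (\<forall>q'. prime_ideal q' \<and> f \<notin> q' \<longrightarrow> \<Phi> N q'))"
      by blast
  qed
  then obtain N where N: "\<And>q. q \<in> Supp smM W \<Longrightarrow> \<Phi> N q" by blast
  have "sec_smult smN r \<gamma> = sec_zero smM smN W" if r: "r \<in> ideal_pow (colon smM K) (Suc N)" for r
  proof
    fix q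
    show "sec_smult smN r \<gamma> q = sec_zero smM smN W q"
    proof (cases "q \<in> Supp smM W")
      case True
      then show ?thesis
        using \<Phi>_mono[OF N[OF True], of "Suc N"] r G(2) unfolding \<Phi>_def sec_zero_def by simp
    next
      case False
      then have "\<gamma> q = {}" using \<gamma> unfolding A_sec_def by blast
      with False show ?thesis unfolding sec_smult_def sec_zero_def by simp
    qed
  qed
  then show "\<gamma> \<in> Gamma_tors smM smN (colon smM K) W"
    unfolding Gamma_tors_def using \<gamma> by (intro CollectI conjI exI[of _ "Suc N"]) auto
qed

theorem proposition3p10:
  fixes smM :: "'r::comm_ring_1 \<Rightarrow> 'm::ab_group_add \<Rightarrow> 'm"
    and smN :: "'r \<Rightarrow> 'n::ab_group_add \<Rightarrow> 'n"
    and K :: "'m set" and U W :: "'m set set"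
  assumes "module smM" and "module smN"
    and "noetherian_ring TYPE('r)"
    and "faithful smM" and "primeful smM" and "Spec_mod smM \<noteq> {}"
    and "module.subspace smM K"
    and "U = Spec_mod smM - Vset smM K"
    and "zopen smM W" and "U \<subseteq> W"
  shows "ker_restr smM smN W U = Gamma_tors smM smN (colon smM K) W"
proof
  have surj: "colon smM ` Spec_mod smM = {q. prime_ideal q}"
    using assms(1,4-6) by (rule colon_Spec_mod_eq_prime_ideals)
  obtain L where "W = Spec_mod smM - Vset smM L"
    using \<open>zopen smM W\<close> unfolding zopen_def by blast
  then show "ker_restr smM smN W U \<subseteq> Gamma_tors smM smN (colon smM K) W"
    using ker_restr_subset_Gamma_tors[OF assms(1-3) surj assms(7,8)] by blast
  show "Gamma_tors smM smN (colon smM K) W \<subseteq> ker_restr smM smN W U"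
    using assms(1,2,8,10) by (rule Gamma_tors_subset_ker_restr)
qed

end
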